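(* Let $\beta>0$, let $\tilde r_h\in\mathbb{R}^{\mathcal{S}\times\mathcal{A}}$ for $h\in[H]$, and let $d^t=(d^t_1,\dots,d^t_H)$ be a feasible occupancy measure with policy $\pi^t_h=\pi_{d^t_h}$ and $\mu^t_h:=d^t_h$. Let $$d^{t+1}=\arg\max_{d\in\Delta^H}\ \sum_{h=1}^H\Big(\langle d_h,\tilde r_h\rangle-\tfrac1\beta D(d_h,d^t_h)-\tfrac1\beta \mathcal{H}(d_h,d^t_h)\Big)\quad\text{s.t.}\quad E^Td_1=\nu_1,\ \ E^Td_h=F^Td_{h-1}\ \ \forall h\in\{2,\dots,H\}.$$ Then the policy $\pi^{t+1}_h=\pi_{d^{t+1}_h}$ with occupancy measure $d^{t+1}_h$ satisfies $$\pi^{t+1}_h(a|s)\ \propto\ \pi^t_h(a|s)\exp\big(\beta Q^t_h(s,a)\big),$$ where $Q^t=(Q^t_1,\dots,Q^t_H)$ is a minimizer over $Q=(Q_1,\dots,Q_H)$ of the loss $$\frac1\beta\sum_{h=1}^H\log\sum_{s,a}\mu^t_h(s,a)\exp\Big(\beta\big(\tilde r_h+FV_{h+1}-Q_h\big)(s,a)\Big)+\langle\nu_1,V_1\rangle,$$ in which $V_{H+1}\equiv0$ and $V_h(s)=\frac1\beta\log\sum_a\pi^t_h(a|s)\exp(\beta Q_h(s,a))$; and $V^t_h(s)=\frac1\beta\log\sum_a\pi^t_h(a|s)\exp(\beta Q^t_h(s,a))$.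
   Context: Finite state space $\mathcal{S}$, finite action space $\mathcal{A}$, horizon $H$, transition kernel $f$, initial distribution $\nu_1$. $\Delta^H$ is the $H$-fold product of the simplex $\Delta_{\mathcal{S}\times\mathcal{A}}$. The matrix $E$ acts by $(Ez)(s,a)=z(s)$ so $(E^Td)(s)=\sum_ad(s,a)$; the matrix $F$ acts by $(Fz)(s,a)=\sum_{s'}f(s'|s,a)z(s')$ so $(F^Td)(s')=\sum_{s,a}f(s'|s,a)d(s,a)$. For $d\in\Delta_{\mathcal{S}\times\mathcal{A}}$, $\pi_d(a|s)=d(s,a)/\sum_{a'}d(s,a')$. Relative entropy: $D(d,d')=\sum_{s,a}d(s,a)\log\frac{d(s,a)}{d'(s,a)}$. Conditional relative entropy: $\mathcal{H}(d,d')=\sum_{s,a}d(s,a)\log\frac{\pi_d(a|s)}{\pi_{d'}(a|s)}$. *)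

theory Defs
  imports Complex_Main
begin

text \<open>Finite MDP: states 's, actions 'a (finite types), horizon H, kernel f s a s' = f(s'|s,a),
  initial distribution nu. Stage-indexed objects are functions of type nat => ..., used on 1..H.\<close>

definition simplex :: "('s::finite \<times> 'a::finite \<Rightarrow> real) \<Rightarrow> bool" where
  "simplex d \<longleftrightarrow> (\<forall>x. 0 \<le> d x) \<and> (\<Sum>x\<in>UNIV. d x) = 1"

definition ET :: "('s::finite \<times> 'a::finite \<Rightarrow> real) \<Rightarrow> 's \<Rightarrow> real" where
  "ET d s = (\<Sum>a\<in>UNIV. d (s, a))"

definition FT :: "('s::finite \<Rightarrow> 'a::finite \<Rightarrow> 's \<Rightarrow> real) \<Rightarrow> ('s \<times> 'a \<Rightarrow> real) \<Rightarrow> 's \<Rightarrow> real" where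
  "FT f d s' = (\<Sum>x\<in>UNIV. f (fst x) (snd x) s' * d x)"

definition Fop :: "('s::finite \<Rightarrow> 'a::finite \<Rightarrow> 's \<Rightarrow> real) \<Rightarrow> ('s \<Rightarrow> real) \<Rightarrow> 's \<times> 'a \<Rightarrow> real" where
  "Fop f z x = (\<Sum>s'\<in>UNIV. f (fst x) (snd x) s' * z s')"

definition pol :: "('s \<times> 'a::finite \<Rightarrow> real) \<Rightarrow> 'a \<Rightarrow> 's \<Rightarrow> real" where
  "pol d a s = d (s, a) / (\<Sum>a'\<in>UNIV. d (s, a'))"

definition inner_sa :: "('s::finite \<times> 'a::finite \<Rightarrow> real) \<Rightarrow> ('s \<times> 'a \<Rightarrow> real) \<Rightarrow> real" where
  "inner_sa d r = (\<Sum>x\<in>UNIV. d x * r x)"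

definition relent :: "('s::finite \<times> 'a::finite \<Rightarrow> real) \<Rightarrow> ('s \<times> 'a \<Rightarrow> real) \<Rightarrow> real" where
  "relent d d' = (\<Sum>x\<in>UNIV. d x * ln (d x / d' x))"

definition condrelent :: "('s::finite \<times> 'a::finite \<Rightarrow> real) \<Rightarrow> ('s \<times> 'a \<Rightarrow> real) \<Rightarrow> real" where
  "condrelent d d' = (\<Sum>x\<in>UNIV. d x * ln (pol d (snd x) (fst x) / pol d' (snd x) (fst x)))"

definition feasible :: "('s::finite \<Rightarrow> 'a::finite \<Rightarrow> 's \<Rightarrow> real) \<Rightarrow> ('s \<Rightarrow> real) \<Rightarrow> nat
    \<Rightarrow> (nat \<Rightarrow> 's \<times> 'a \<Rightarrow> real) \<Rightarrow> bool" where
  "feasible f \<nu> H d \<longleftrightarrow>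
     (\<forall>h\<in>{1..H}. simplex (d h)) \<and>
     (\<forall>h\<in>{1..H}. ET (d h) = (if h = 1 then \<nu> else FT f (d (h - 1))))"

definition objective :: "real \<Rightarrow> nat \<Rightarrow> (nat \<Rightarrow> 's::finite \<times> 'a::finite \<Rightarrow> real)
    \<Rightarrow> (nat \<Rightarrow> 's \<times> 'a \<Rightarrow> real) \<Rightarrow> (nat \<Rightarrow> 's \<times> 'a \<Rightarrow> real) \<Rightarrow> real" where
  "objective \<beta> H r dt d =
     (\<Sum>h=1..H. inner_sa (d h) (r h) - relent (d h) (dt h) / \<beta> - condrelent (d h) (dt h) / \<beta>)"

definition Vfun :: "real \<Rightarrow> nat \<Rightarrow> (nat \<Rightarrow> 's \<times> 'a::finite \<Rightarrow> real)
    \<Rightarrow> (nat \<Rightarrow> 's \<times> 'a \<Rightarrow> real) \<Rightarrow> nat \<Rightarrow> 's \<Rightarrow> real" where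
  "Vfun \<beta> H dt Q h s =
     (if h \<le> H then ln (\<Sum>a\<in>UNIV. pol (dt h) a s * exp (\<beta> * Q h (s, a))) / \<beta> else 0)"

definition loss :: "real \<Rightarrow> nat \<Rightarrow> ('s::finite \<Rightarrow> 'a::finite \<Rightarrow> 's \<Rightarrow> real) \<Rightarrow> ('s \<Rightarrow> real)
    \<Rightarrow> (nat \<Rightarrow> 's \<times> 'a \<Rightarrow> real) \<Rightarrow> (nat \<Rightarrow> 's \<times> 'a \<Rightarrow> real)
    \<Rightarrow> (nat \<Rightarrow> 's \<times> 'a \<Rightarrow> real) \<Rightarrow> real" where
  "loss \<beta> H f \<nu> r dt Q =
     (\<Sum>h=1..H. ln (\<Sum>x\<in>UNIV. dt h x *
        exp (\<beta> * (r h x + Fop f (Vfun \<beta> H dt Q (h + 1)) x - Q h x)))) / \<beta>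
     + (\<Sum>s\<in>UNIV. \<nu> s * Vfun \<beta> H dt Q 1 s)"

end

(*
  Expanding D and H, the objective is a sum over stages of a linear term, minus 2/beta times the
  negentropy of d_h, plus 1/beta times the negentropy of its state marginal.  The entropy is a
  barrier: if the maximiser d = d^(t+1) vanished somewhere, mixing it with d^t would raise the
  objective at rate -t ln t, so d > 0.  Its first-order conditions along circulations (perturbations
  preserving the flow constraints) are unpacked by a backward recursion into dual values lambda_h
  with vanishing advantage, and Q*_h = (ln pi_d - ln pi^t)/beta + lambda_h is the candidate minimiser.

  On the other hand, for every Q and every feasible d', telescoping the V-terms along the flow gives
    loss Q = objective d' + (1/beta) sum_h (D(d'_h, p_h) + D(d'_h, q_h)),
  where p_h is d^t_h tilted by exp(beta (r_h + F V_(h+1) - Q_h)) and q_h has the state marginal of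
  d'_h and the policy proportional to pi^t_h exp(beta Q_h).  So the loss dominates the maximal
  objective, with equality at Q*, and every minimiser has D(d_h, q_h) = 0 for d = d^(t+1): this is
  the policy update.
*)

theory Submission
  imports Defs
begin

section \<open>Entropy inequalities\<close>

definition xlnx :: "real \<Rightarrow> real" where
  "xlnx u = u * ln u"

lemma xlnx_tangent_le:
  assumes a: "0 < a" and u: "0 \<le> u"
  shows "xlnx a + (ln a + 1) * (u - a) \<le> xlnx u"
proof (cases "u = 0")
  case True
  then show ?thesis using a by (simp add: xlnx_def algebra_simps)
next
  case False
  then have u: "0 < u" using u by simp
  have "ln (a / u) \<le> a / u - 1" using a u by (intro ln_le_minus_one) simp
  then have "ln a - ln u \<le> a / u - 1" using a u by (simp add: ln_divide_pos)
  then have "u * (ln a - ln u) \<le> u * (a / u - 1)" using u by (intro mult_left_mono) auto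
  then have "u * ln a - u * ln u \<le> a - u" using u by (simp add: algebra_simps)
  then show ?thesis by (simp add: xlnx_def algebra_simps)
qed

lemma xlnx_le_tangent_plus_square:
  assumes a: "0 < a" and u: "0 < u"
  shows "xlnx u \<le> xlnx a + (ln a + 1) * (u - a) + (u - a)\<^sup>2 / a"
proof -
  have "ln (u / a) \<le> u / a - 1" using a u by (intro ln_le_minus_one) simp
  then have "u * (ln u - ln a) \<le> u * (u / a - 1)"
    using a u by (intro mult_left_mono) (auto simp: ln_divide_pos)
  also have "u * (u / a - 1) = (u - a)\<^sup>2 / a + (u - a)"
    using a by (simp add: field_simps power2_eq_square)
  finally show ?thesis by (simp add: xlnx_def algebra_simps)
qed

text \<open>The extra term \<open>t ln t\<close> on the support of \<open>b\<close> outside that of \<open>a\<close> is negative of order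
  larger than \<open>t\<close>; this is the entropy barrier that keeps maximisers away from the boundary.\<close>

lemma xlnx_mixture_le:
  assumes a: "0 \<le> a" and b: "0 < b" and t: "0 < t" "t \<le> 1"
  shows "xlnx ((1 - t) * a + t * b)
    \<le> (1 - t) * xlnx a + t * xlnx b + t * ln t * (if a = 0 then b else 0)"
proof (cases "a = 0")
  case True
  then show ?thesis using b t by (simp add: xlnx_def ln_mult_pos algebra_simps)
next
  case False
  define m where "m = (1 - t) * a + t * b"
  have m: "0 < m" unfolding m_def using a b t False
    by (smt (verit) mult_nonneg_nonneg mult_pos_pos)
  have "(1 - t) * (xlnx m + (ln m + 1) * (a - m)) \<le> (1 - t) * xlnx a"
    using xlnx_tangent_le[OF m a] t by (intro mult_left_mono) auto
  moreover have "t * (xlnx m + (ln m + 1) * (b - m)) \<le> t * xlnx b"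
    using xlnx_tangent_le[OF m] b t by (intro mult_left_mono) auto
  moreover have "(1 - t) * (xlnx m + (ln m + 1) * (a - m)) + t * (xlnx m + (ln m + 1) * (b - m))
      = xlnx m"
    unfolding m_def by (simp add: algebra_simps)
  ultimately have "xlnx m \<le> (1 - t) * xlnx a + t * xlnx b" by linarith
  then show ?thesis using False unfolding m_def by simp
qed

lemma xlnx_mixture_ge:
  assumes a: "0 \<le> a" and b: "0 < b" and t: "0 < t" "t \<le> 1"
  shows "xlnx a + t * (if a = 0 then xlnx b else (ln a + 1) * (b - a))
      + t * ln t * (if a = 0 then b else 0) \<le> xlnx ((1 - t) * a + t * b)"
proof (cases "a = 0")
  case True
  then show ?thesis using b t by (simp add: xlnx_def ln_mult_pos algebra_simps)
next
  case False
  then have "0 < a" using a by simp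
  moreover have "0 \<le> (1 - t) * a + t * b" using a b t by simp
  ultimately show ?thesis
    using xlnx_tangent_le[of a "(1 - t) * a + t * b"] False by (simp add: algebra_simps)
qed

lemma diff_le_mult_ln_div:
  fixes p q :: real
  assumes p: "0 \<le> p" and q: "0 \<le> q" and supp: "0 < p \<Longrightarrow> 0 < q"
  shows "p - q \<le> p * ln (p / q)"
proof (cases "p = 0")
  case True
  then show ?thesis using q by simp
next
  case False
  then have p: "0 < p" using p by simp
  then have q: "0 < q" using supp by simp
  have "ln (q / p) \<le> q / p - 1" using p q by (intro ln_le_minus_one) simp
  then have "p * (ln q - ln p) \<le> p * (q / p - 1)"
    using p q by (intro mult_left_mono) (auto simp: ln_divide_pos)
  then show ?thesis using p q by (simp add: ln_divide_pos algebra_simps)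
qed

lemma mult_ln_div_eq_diff_ln:
  fixes p u q :: real
  assumes "0 \<le> p" and "0 < p \<Longrightarrow> 0 < u \<and> 0 < q"
  shows "p * ln (u / q) = p * ln u - p * ln q"
  using assms by (cases "p = 0") (auto simp: ln_divide_pos algebra_simps)

lemma mult_ln_div_eq_diff_imp_eq:
  fixes p q :: real
  assumes p: "0 < p" and q: "0 < q" and eq: "p * ln (p / q) = p - q"
  shows "q = p"
proof -
  have "ln (q / p) = q / p - 1"
    using eq p q by (simp add: ln_divide_pos field_simps)
  then have "q / p = 1" using p q by (intro ln_eq_minus_one) auto
  then show ?thesis using p by simp
qed

lemma relent_self: "relent p p = 0"
  unfolding relent_def by (rule sum.neutral) simp

lemma gibbs_inequality:
  fixes p q :: "'x::finite \<Rightarrow> real"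
  assumes p: "\<forall>x. 0 \<le> p x" and q: "\<forall>x. 0 \<le> q x" and supp: "\<forall>x. 0 < p x \<longrightarrow> 0 < q x"
    and sum_p: "(\<Sum>x\<in>UNIV. p x) = 1" and sum_q: "(\<Sum>x\<in>UNIV. q x) \<le> 1"
  shows "0 \<le> (\<Sum>x\<in>UNIV. p x * ln (p x / q x))"
proof -
  have "(\<Sum>x\<in>UNIV. p x - q x) \<le> (\<Sum>x\<in>UNIV. p x * ln (p x / q x))"
    using p q supp by (intro sum_mono diff_le_mult_ln_div) auto
  moreover have "(\<Sum>x\<in>UNIV. p x - q x) = 1 - (\<Sum>x\<in>UNIV. q x)"
    using sum_p by (simp add: sum_subtractf)
  ultimately show ?thesis using sum_q by linarith
qed

lemma gibbs_inequality_le_0_imp_eq: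
  fixes p q :: "'x::finite \<Rightarrow> real"
  assumes p: "\<forall>x. 0 < p x" and q: "\<forall>x. 0 < q x"
    and sum_p: "(\<Sum>x\<in>UNIV. p x) = 1" and sum_q: "(\<Sum>x\<in>UNIV. q x) = 1"
    and le_0: "(\<Sum>x\<in>UNIV. p x * ln (p x / q x)) \<le> 0"
  shows "q = p"
proof
  fix x
  define gap where "gap x = p x * ln (p x / q x) - (p x - q x)" for x
  have gap_nonneg: "\<forall>x\<in>UNIV. 0 \<le> gap x"
    unfolding gap_def using p q diff_le_mult_ln_div by (simp add: less_imp_le)
  have "(\<Sum>x\<in>UNIV. gap x) = (\<Sum>x\<in>UNIV. p x * ln (p x / q x)) - (\<Sum>x\<in>UNIV. p x - q x)"
    unfolding gap_def by (simp add: sum_subtractf)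
  also have "(\<Sum>x\<in>UNIV. p x - q x) = 0" using sum_p sum_q by (simp add: sum_subtractf)
  finally have "(\<Sum>x\<in>UNIV. gap x) = 0"
    using le_0 sum_nonneg[of UNIV gap] gap_nonneg by simp
  then have "gap x = 0" using sum_nonneg_eq_0_iff[of UNIV gap] gap_nonneg by simp
  then show "q x = p x"
    using mult_ln_div_eq_diff_imp_eq p q unfolding gap_def by (simp add: algebra_simps)
qed

lemma exists_ln_mult_less:
  fixes K M :: real
  assumes "0 < M"
  shows "\<exists>t. 0 < t \<and> t \<le> 1 \<and> ln t * M < K"
proof (intro exI conjI)
  let ?t = "exp (- \<bar>K\<bar> / M - 1)"
  show "0 < ?t" by simp
  have "0 \<le> \<bar>K\<bar> / M" using assms by simp
  then show "?t \<le> 1" by simp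
  have "ln ?t * M = - \<bar>K\<bar> - M" using assms by (simp add: field_simps)
  then show "ln ?t * M < K" using assms by linarith
qed

lemma linear_le_quadratic_imp_zero:
  fixes g C \<epsilon> :: real
  assumes \<epsilon>: "0 < \<epsilon>" and le: "\<And>t. \<bar>t\<bar> < \<epsilon> \<Longrightarrow> t * g \<le> t\<^sup>2 * C"
  shows "g = 0"
proof (rule ccontr)
  assume "g \<noteq> 0"
  define \<tau> where "\<tau> = min (\<epsilon> / 2) (\<bar>g\<bar> / (\<bar>C\<bar> + 1))"
  have "0 < \<bar>g\<bar> / (\<bar>C\<bar> + 1)" using \<open>g \<noteq> 0\<close> by (simp add: add_nonneg_pos)
  then have "0 < \<tau>" "\<tau> < \<epsilon>" unfolding \<tau>_def using \<epsilon> by auto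
  moreover have "\<tau> * (\<bar>C\<bar> + 1) \<le> \<bar>g\<bar>"
    using pos_le_divide_eq[of "\<bar>C\<bar> + 1" \<tau> "\<bar>g\<bar>"] unfolding \<tau>_def by (simp add: add_nonneg_pos)
  ultimately have \<tau>: "0 < \<tau>" "\<tau> < \<epsilon>" "\<tau> * (\<bar>C\<bar> + 1) \<le> \<bar>g\<bar>" by blast+
  have "g * sgn g = \<bar>g\<bar>" "(sgn g)\<^sup>2 = 1" using \<open>g \<noteq> 0\<close> by (auto simp: sgn_if)
  then have "\<tau> * \<bar>g\<bar> \<le> \<tau>\<^sup>2 * C"
    using le[of "sgn g * \<tau>"] \<tau> \<open>g \<noteq> 0\<close> by (simp add: abs_mult power_mult_distrib mult_ac)
  also have "\<dots> \<le> \<tau>\<^sup>2 * \<bar>C\<bar>" by (intro mult_left_mono) auto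
  finally have "\<bar>g\<bar> \<le> \<tau> * \<bar>C\<bar>" using \<tau>(1) by (simp add: power2_eq_square)
  moreover have "\<tau> * \<bar>C\<bar> < \<tau> * (\<bar>C\<bar> + 1)" using \<tau>(1) by simp
  ultimately show False using \<tau>(3) by linarith
qed

section \<open>Occupancy measures and flow constraints\<close>

lemma sum_UNIV_prod:
  fixes g :: "'s::finite \<times> 'a::finite \<Rightarrow> 'b::comm_monoid_add"
  shows "(\<Sum>x\<in>UNIV. g x) = (\<Sum>s\<in>UNIV. \<Sum>a\<in>UNIV. g (s, a))"
  by (simp add: sum.cartesian_product)

lemma ET_lincomb: "ET (\<lambda>x. a * u x + b * v x) s = a * ET u s + b * ET v s"
  by (simp add: ET_def sum.distrib sum_distrib_left)

lemma FT_lincomb: "FT f (\<lambda>x. a * u x + b * v x) s = a * FT f u s + b * FT f v s"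
  by (simp add: FT_def sum.distrib sum_distrib_left algebra_simps)

lemma sum_ET: "(\<Sum>s\<in>UNIV. ET z s) = (\<Sum>x\<in>UNIV. z x)"
  by (simp add: ET_def sum_UNIV_prod)

lemma sum_mult_fst_eq_ET: "(\<Sum>x\<in>UNIV. z x * V (fst x)) = (\<Sum>s\<in>UNIV. ET z s * V s)"
  by (simp add: ET_def sum_UNIV_prod sum_distrib_right)

lemma sum_mult_Fop_eq_FT: "(\<Sum>x\<in>UNIV. z x * Fop f V x) = (\<Sum>s'\<in>UNIV. FT f z s' * V s')"
proof -
  have "(\<Sum>x\<in>UNIV. z x * Fop f V x) = (\<Sum>x\<in>UNIV. \<Sum>s'\<in>UNIV. z x * (f (fst x) (snd x) s' * V s'))"
    by (simp add: Fop_def sum_distrib_left)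
  also have "\<dots> = (\<Sum>s'\<in>UNIV. \<Sum>x\<in>UNIV. z x * (f (fst x) (snd x) s' * V s'))"
    by (rule sum.swap)
  also have "\<dots> = (\<Sum>s'\<in>UNIV. FT f z s' * V s')"
    by (simp add: FT_def sum_distrib_right sum_distrib_left algebra_simps)
  finally show ?thesis .
qed

lemma sum_FT:
  assumes "\<forall>s a. (\<Sum>s'\<in>UNIV. f s a s') = 1"
  shows "(\<Sum>s'\<in>UNIV. FT f z s') = (\<Sum>x\<in>UNIV. z x)"
proof -
  have "(\<Sum>s'\<in>UNIV. FT f z s') = (\<Sum>x\<in>UNIV. (\<Sum>s'\<in>UNIV. f (fst x) (snd x) s') * z x)"
    unfolding FT_def sum_distrib_right by (rule sum.swap)
  then show ?thesis using assms by simp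
qed

lemma le_ET: "\<forall>x. 0 \<le> z x \<Longrightarrow> z (s, a) \<le> ET z s"
  unfolding ET_def by (intro member_le_sum) auto

lemma ET_nonneg: "\<forall>x. 0 \<le> z x \<Longrightarrow> 0 \<le> ET z s"
  unfolding ET_def by (intro sum_nonneg) auto

lemma ET_pos: "\<forall>x. 0 < z x \<Longrightarrow> 0 < ET z s"
  unfolding ET_def by (intro sum_pos) auto

lemma pol_eq_div_ET: "pol d a s = d (s, a) / ET d s"
  by (simp add: pol_def ET_def)

lemma sum_pol: "ET d s \<noteq> 0 \<Longrightarrow> (\<Sum>a\<in>UNIV. pol d a s) = 1"
  by (simp add: pol_eq_div_ET ET_def flip: sum_divide_distrib)

lemma pol_pos:
  fixes d :: "'s::finite \<times> 'a::finite \<Rightarrow> real"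
  shows "\<forall>x. 0 < d x \<Longrightarrow> 0 < pol d a s"
  using ET_pos[of d s] by (simp add: pol_eq_div_ET)

lemma relent_eq_sum_xlnx:
  assumes d: "\<forall>x. 0 \<le> d x" and d': "\<forall>x. 0 < d' x"
  shows "relent d d' = (\<Sum>x\<in>UNIV. xlnx (d x)) - (\<Sum>x\<in>UNIV. d x * ln (d' x))"
proof -
  have "relent d d' = (\<Sum>x\<in>UNIV. xlnx (d x) - d x * ln (d' x))"
    unfolding relent_def xlnx_def using d[rule_format] d'[rule_format]
    by (intro sum.cong refl mult_ln_div_eq_diff_ln) auto
  then show ?thesis by (simp add: sum_subtractf)
qed

lemma condrelent_eq_sum_xlnx:
  fixes d d' :: "'s::finite \<times> 'a::finite \<Rightarrow> real"
  assumes d: "\<forall>x. 0 \<le> d x" and d': "\<forall>x. 0 < d' x"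
  shows "condrelent d d' = (\<Sum>x\<in>UNIV. xlnx (d x)) - (\<Sum>s\<in>UNIV. xlnx (ET d s))
    - (\<Sum>x\<in>UNIV. d x * ln (pol d' (snd x) (fst x)))"
proof -
  have ET_pos: "0 < ET d (fst x)" if "0 < d x" for x
    using le_ET[OF d, of "fst x" "snd x"] that by simp
  have "d x * ln (pol d (snd x) (fst x) / pol d' (snd x) (fst x))
      = xlnx (d x) - d x * ln (ET d (fst x)) - d x * ln (pol d' (snd x) (fst x))" for x
  proof -
    have "d x * ln (pol d (snd x) (fst x)) = xlnx (d x) - d x * ln (ET d (fst x))"
      unfolding pol_eq_div_ET xlnx_def prod.collapse using d[rule_format] ET_pos
      by (intro mult_ln_div_eq_diff_ln) auto
    moreover have "0 < d x \<Longrightarrow> 0 < pol d (snd x) (fst x)"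
      using ET_pos by (simp add: pol_eq_div_ET)
    then have "d x * ln (pol d (snd x) (fst x) / pol d' (snd x) (fst x))
        = d x * ln (pol d (snd x) (fst x)) - d x * ln (pol d' (snd x) (fst x))"
      using d[rule_format] pol_pos[OF d'] by (intro mult_ln_div_eq_diff_ln) auto
    ultimately show ?thesis by simp
  qed
  moreover have "(\<Sum>x\<in>UNIV. d x * ln (ET d (fst x))) = (\<Sum>s\<in>UNIV. xlnx (ET d s))"
    unfolding xlnx_def by (rule sum_mult_fst_eq_ET)
  ultimately show ?thesis unfolding condrelent_def by (simp add: sum_subtractf)
qed

lemma sum_null_marginal_le:
  fixes d y :: "'s::finite \<times> 'a::finite \<Rightarrow> real"
  assumes d: "\<forall>x. 0 \<le> d x" and y: "\<forall>x. 0 \<le> y x"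
  shows "(\<Sum>s\<in>UNIV. if ET d s = 0 then ET y s else 0) \<le> (\<Sum>x\<in>UNIV. if d x = 0 then y x else 0)"
proof -
  have "(\<Sum>s\<in>UNIV. if ET d s = 0 then ET y s else 0)
      = (\<Sum>s\<in>UNIV. \<Sum>a\<in>UNIV. if ET d s = 0 then y (s, a) else 0)"
    by (intro sum.cong) (auto simp: ET_def)
  also have "\<dots> \<le> (\<Sum>s\<in>UNIV. \<Sum>a\<in>UNIV. if d (s, a) = 0 then y (s, a) else 0)"
  proof (intro sum_mono)
    fix s a
    have "ET d s = 0 \<Longrightarrow> d (s, a) = 0" using le_ET[OF d, of s a] d by (simp add: order_antisym)
    then show "(if ET d s = 0 then y (s, a) else 0) \<le> (if d (s, a) = 0 then y (s, a) else 0)"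
      using y by auto
  qed
  finally show ?thesis by (simp add: sum_UNIV_prod)
qed

lemma feasible_stage:
  "feasible f \<nu> H z \<Longrightarrow> h \<in> {1..H} \<Longrightarrow> (\<forall>x. 0 \<le> z h x) \<and> (\<Sum>x\<in>UNIV. z h x) = 1"
  unfolding feasible_def simplex_def by blast

locale finite_mdp =
  fixes f :: "'s::finite \<Rightarrow> 'a::finite \<Rightarrow> 's \<Rightarrow> real" and \<nu> :: "'s \<Rightarrow> real" and H :: nat
  assumes f_sum: "\<forall>s a. (\<Sum>s'\<in>UNIV. f s a s') = 1"
    and nu_sum: "(\<Sum>s\<in>UNIV. \<nu> s) = 1"
begin

definition bellman_flow :: "(nat \<Rightarrow> 's \<times> 'a \<Rightarrow> real) \<Rightarrow> ('s \<Rightarrow> real) \<Rightarrow> bool" where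
  "bellman_flow z c \<longleftrightarrow> (\<forall>h\<in>{1..H}. ET (z h) = (if h = 1 then c else FT f (z (h - 1))))"

lemma bellman_flow_lincomb:
  assumes "bellman_flow z c" and "bellman_flow w c'"
  shows "bellman_flow (\<lambda>h x. a * z h x + b * w h x) (\<lambda>s. a * c s + b * c' s)"
  using assms unfolding bellman_flow_def by (auto simp: fun_eq_iff ET_lincomb FT_lincomb)

lemma bellman_flow_mass:
  assumes flow: "bellman_flow z c" and h: "h \<in> {1..H}"
  shows "(\<Sum>x\<in>UNIV. z h x) = (\<Sum>s\<in>UNIV. c s)"
  using h
proof (induction h)
  case 0
  then show ?case by simp
next
  case (Suc k)
  show ?case
  proof (cases "k = 0")
    case True
    then have "ET (z (Suc k)) = c" using flow Suc.prems unfolding bellman_flow_def by auto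
    then show ?thesis using sum_ET[of "z (Suc k)"] by simp
  next
    case False
    then have "ET (z (Suc k)) = FT f (z k)" using flow Suc.prems unfolding bellman_flow_def by auto
    then have "(\<Sum>x\<in>UNIV. z (Suc k) x) = (\<Sum>x\<in>UNIV. z k x)"
      using sum_ET[of "z (Suc k)"] sum_FT[OF f_sum, of "z k"] by simp
    then show ?thesis using Suc False by simp
  qed
qed

lemma feasible_iff:
  "feasible f \<nu> H d \<longleftrightarrow> (\<forall>h\<in>{1..H}. \<forall>x. 0 \<le> d h x) \<and> bellman_flow d \<nu>"
  using bellman_flow_mass[of d \<nu>] nu_sum unfolding feasible_def bellman_flow_def simplex_def
  by auto

lemma feasible_mixture:
  assumes "feasible f \<nu> H d" and "feasible f \<nu> H d'" and "0 \<le> t" and "t \<le> 1"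
  shows "feasible f \<nu> H (\<lambda>h x. (1 - t) * d h x + t * d' h x)"
proof -
  have "bellman_flow (\<lambda>h x. (1 - t) * d h x + t * d' h x) (\<lambda>s. (1 - t) * \<nu> s + t * \<nu> s)"
    using assms(1,2) unfolding feasible_iff by (intro bellman_flow_lincomb) auto
  moreover have "(\<lambda>s. (1 - t) * \<nu> s + t * \<nu> s) = \<nu>" by (simp add: algebra_simps)
  ultimately show ?thesis using assms unfolding feasible_iff by simp
qed

lemma feasible_add_circulation:
  assumes "bellman_flow d \<nu>" and "bellman_flow \<delta> (\<lambda>s. 0)"
    and "\<forall>h\<in>{1..H}. \<forall>x. 0 \<le> d h x + t * \<delta> h x"
  shows "feasible f \<nu> H (\<lambda>h x. d h x + t * \<delta> h x)"
  using bellman_flow_lincomb[OF assms(1,2), of 1 t] assms(3) unfolding feasible_iff by simp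

lemma bellman_flow_telescope:
  assumes flow: "bellman_flow z c" and V_top: "V (Suc H) = (\<lambda>s. 0)"
  shows "(\<Sum>h=1..H. (\<Sum>x\<in>UNIV. z h x * Fop f (V (h + 1)) x) - (\<Sum>x\<in>UNIV. z h x * V h (fst x)))
    = - (\<Sum>s\<in>UNIV. c s * V 1 s)"
proof -
  define a where "a h = (\<Sum>s\<in>UNIV. ET (z h) s * V h s)" for h
  have step: "(\<Sum>x\<in>UNIV. z h x * Fop f (V (h + 1)) x) - (\<Sum>x\<in>UNIV. z h x * V h (fst x))
      = a (Suc h) - a h" if h: "h \<in> {1..H}" for h
  proof -
    have "(\<Sum>s'\<in>UNIV. FT f (z h) s' * V (h + 1) s') = a (Suc h)"
    proof (cases "h < H")
      case True
      then have "ET (z (Suc h)) = FT f (z h)" using flow h unfolding bellman_flow_def by auto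
      then show ?thesis unfolding a_def by simp
    next
      case False
      then show ?thesis unfolding a_def using h V_top by simp
    qed
    then show ?thesis unfolding sum_mult_Fop_eq_FT sum_mult_fst_eq_ET a_def by simp
  qed
  have "a 1 - a (Suc H) = (\<Sum>s\<in>UNIV. c s * V 1 s)"
  proof (cases "H = 0")
    case True
    then show ?thesis using V_top unfolding a_def by simp
  next
    case False
    then show ?thesis using flow V_top unfolding a_def bellman_flow_def by simp
  qed
  moreover have "(\<Sum>h=1..H. a (Suc h) - a h) = a (Suc H) - a 1"
    by (intro sum_Suc_diff) simp
  ultimately show ?thesis using step by simp
qed

end

section \<open>The objective as a sum of entropic stage objectives\<close>

locale mirror_step = finite_mdp f \<nu> H
  for f :: "'s::finite \<Rightarrow> 'a::finite \<Rightarrow> 's \<Rightarrow> real" and \<nu> :: "'s \<Rightarrow> real" and H :: nat +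
  fixes \<beta> :: real and r dt :: "nat \<Rightarrow> 's \<times> 'a \<Rightarrow> real"
  assumes beta_pos: "0 < \<beta>"
    and dt_feas: "feasible f \<nu> H dt"
    and dt_pos: "\<forall>h\<in>{1..H}. \<forall>x. 0 < dt h x"
begin

lemma dt_pos': "h \<in> {1..H} \<Longrightarrow> 0 < dt h x"
  using dt_pos by blast

lemma pol_dt_pos: "h \<in> {1..H} \<Longrightarrow> 0 < pol (dt h) a s"
  using dt_pos pol_pos by blast

definition shifted_reward :: "nat \<Rightarrow> 's \<times> 'a \<Rightarrow> real" where
  "shifted_reward h x = r h x + (ln (dt h x) + ln (pol (dt h) (snd x) (fst x))) / \<beta>"

definition stage_obj :: "nat \<Rightarrow> ('s \<times> 'a \<Rightarrow> real) \<Rightarrow> real" where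
  "stage_obj h d = (\<Sum>x\<in>UNIV. d x * shifted_reward h x) - 2 / \<beta> * (\<Sum>x\<in>UNIV. xlnx (d x))
      + 1 / \<beta> * (\<Sum>s\<in>UNIV. xlnx (ET d s))"

lemma stage_obj_eq:
  assumes h: "h \<in> {1..H}" and d: "\<forall>x. 0 \<le> d x"
  shows "inner_sa d (r h) - relent d (dt h) / \<beta> - condrelent d (dt h) / \<beta> = stage_obj h d"
proof -
  have dt: "\<forall>x. 0 < dt h x" using dt_pos h by blast
  have "(\<Sum>x\<in>UNIV. d x * shifted_reward h x) = inner_sa d (r h)
      + ((\<Sum>x\<in>UNIV. d x * ln (dt h x)) + (\<Sum>x\<in>UNIV. d x * ln (pol (dt h) (snd x) (fst x)))) / \<beta>"
    unfolding shifted_reward_def inner_sa_def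
    by (simp add: distrib_left sum.distrib add_divide_distrib flip: sum_divide_distrib)
  then show ?thesis
    unfolding stage_obj_def relent_eq_sum_xlnx[OF d dt] condrelent_eq_sum_xlnx[OF d dt]
    using beta_pos by (simp add: field_simps)
qed

lemma objective_eq_sum_stage_obj:
  "\<forall>h\<in>{1..H}. \<forall>x. 0 \<le> d h x \<Longrightarrow> objective \<beta> H r dt d = (\<Sum>h=1..H. stage_obj h (d h))"
  unfolding objective_def using stage_obj_eq by (intro sum.cong) auto

lemma stage_obj_mixture_ge:
  assumes d: "\<forall>x. 0 \<le> d x" and y: "\<forall>x. 0 < y x"
  shows "\<exists>K. \<forall>t. 0 < t \<and> t \<le> 1 \<longrightarrow>
    stage_obj h d + t * K - t * ln t / \<beta> * (\<Sum>x\<in>UNIV. if d x = 0 then y x else 0)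
      \<le> stage_obj h (\<lambda>x. (1 - t) * d x + t * y x)"
proof -
  define m where "m = (\<Sum>x\<in>UNIV. if d x = 0 then y x else 0)"
  define m' where "m' = (\<Sum>s\<in>UNIV. if ET d s = 0 then ET y s else 0)"
  define c where "c s = (if ET d s = 0 then xlnx (ET y s) else (ln (ET d s) + 1) * (ET y s - ET d s))"
    for s
  \<comment> \<open>The barrier term of the marginal has the wrong sign, but its mass \<open>m'\<close> is at most \<open>m\<close>.\<close>
  have m'_le_m: "m' \<le> m"
    unfolding m_def m'_def using sum_null_marginal_le[OF d] y by (simp add: less_imp_le)
  let ?K = "(\<Sum>x\<in>UNIV. (y x - d x) * shifted_reward h x)
    - 2 / \<beta> * (\<Sum>x\<in>UNIV. xlnx (y x) - xlnx (d x)) + 1 / \<beta> * (\<Sum>s\<in>UNIV. c s)"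
  have "stage_obj h d + t * ?K - t * ln t / \<beta> * m \<le> stage_obj h (\<lambda>x. (1 - t) * d x + t * y x)"
    if t: "0 < t" "t \<le> 1" for t
  proof -
    let ?mix = "\<lambda>x. (1 - t) * d x + t * y x"
    define A where "A = (\<Sum>x\<in>UNIV. (1 - t) * xlnx (d x) + t * xlnx (y x)
      + t * ln t * (if d x = 0 then y x else 0)) - (\<Sum>x\<in>UNIV. xlnx (?mix x))"
    define B where "B = (\<Sum>s\<in>UNIV. xlnx (ET ?mix s)) - (\<Sum>s\<in>UNIV. xlnx (ET d s) + t * c s
      + t * ln t * (if ET d s = 0 then ET y s else 0))"
    have "0 \<le> A" unfolding A_def
      by (simp, intro sum_mono xlnx_mixture_le) (use d y t in auto)
    moreover have "0 \<le> B" unfolding B_def c_def ET_lincomb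
      by (simp, intro sum_mono xlnx_mixture_ge) (use d y t ET_nonneg ET_pos in auto)
    moreover have "0 \<le> t * ln t * (m' - m)"
      using t m'_le_m by (intro mult_nonpos_nonpos) (auto simp: mult_nonneg_nonpos)
    moreover have "stage_obj h ?mix - (stage_obj h d + t * ?K - t * ln t / \<beta> * m)
        = 2 / \<beta> * A + 1 / \<beta> * B + 1 / \<beta> * (t * ln t * (m' - m))"
      unfolding stage_obj_def A_def B_def m_def m'_def
      by (simp add: sum.distrib sum_subtractf sum_distrib_left sum_divide_distrib algebra_simps
          diff_divide_distrib)
    ultimately show ?thesis using beta_pos by (smt (verit) divide_nonneg_pos mult_nonneg_nonneg)
  qed
  then show ?thesis unfolding m_def by blast
qed

definition stage_gradient :: "nat \<Rightarrow> ('s \<times> 'a \<Rightarrow> real) \<Rightarrow> 's \<times> 'a \<Rightarrow> real" where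
  "stage_gradient h d x
    = shifted_reward h x - 2 / \<beta> * (ln (d x) + 1) + 1 / \<beta> * (ln (ET d (fst x)) + 1)"

lemma stage_obj_perturb_ge:
  assumes d: "\<forall>x. 0 < d x" and d_t\<delta>: "\<forall>x. 0 < d x + t * \<delta> x"
  shows "stage_obj h d + t * (\<Sum>x\<in>UNIV. \<delta> x * stage_gradient h d x)
      - t\<^sup>2 * (2 / \<beta> * (\<Sum>x\<in>UNIV. (\<delta> x)\<^sup>2 / d x)) \<le> stage_obj h (\<lambda>x. d x + t * \<delta> x)"
proof -
  let ?d' = "\<lambda>x. d x + t * \<delta> x"
  define A where "A = (\<Sum>x\<in>UNIV. xlnx (d x) + (ln (d x) + 1) * (t * \<delta> x) + (t * \<delta> x)\<^sup>2 / d x)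
    - (\<Sum>x\<in>UNIV. xlnx (?d' x))"
  define B where "B = (\<Sum>s\<in>UNIV. xlnx (ET ?d' s)) - (\<Sum>s\<in>UNIV. xlnx (ET d s))
    - t * (\<Sum>x\<in>UNIV. \<delta> x * (ln (ET d (fst x)) + 1))"
  have "xlnx (?d' x) \<le> xlnx (d x) + (ln (d x) + 1) * (t * \<delta> x) + (t * \<delta> x)\<^sup>2 / d x" for x
    using xlnx_le_tangent_plus_square[of "d x" "?d' x"] d d_t\<delta> by simp
  then have A_nonneg: "0 \<le> A" unfolding A_def by (simp add: sum_mono)
  have ET_d': "ET ?d' s = ET d s + t * ET \<delta> s" for s
    by (simp add: ET_def sum.distrib sum_distrib_left)
  have "xlnx (ET d s) + t * (ET \<delta> s * (ln (ET d s) + 1)) \<le> xlnx (ET ?d' s)" for s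
    using xlnx_tangent_le[of "ET d s" "ET ?d' s"] ET_pos[OF d] ET_nonneg[of ?d'] d_t\<delta>
    by (simp add: ET_d' less_imp_le algebra_simps)
  then have "(\<Sum>s\<in>UNIV. xlnx (ET d s)) + t * (\<Sum>s\<in>UNIV. ET \<delta> s * (ln (ET d s) + 1))
      \<le> (\<Sum>s\<in>UNIV. xlnx (ET ?d' s))"
    by (simp add: sum_mono sum_distrib_left flip: sum.distrib)
  then have B_nonneg: "0 \<le> B" unfolding B_def using sum_mult_fst_eq_ET[of \<delta> "\<lambda>s. ln (ET d s) + 1"] by simp
  have "stage_obj h ?d' - (stage_obj h d + t * (\<Sum>x\<in>UNIV. \<delta> x * stage_gradient h d x)
      - t\<^sup>2 * (2 / \<beta> * (\<Sum>x\<in>UNIV. (\<delta> x)\<^sup>2 / d x))) = 2 / \<beta> * A + 1 / \<beta> * B"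
    unfolding stage_obj_def stage_gradient_def A_def B_def
    by (simp add: sum.distrib sum_subtractf sum_distrib_left algebra_simps diff_divide_distrib add_divide_distrib)
  moreover have "0 \<le> 2 / \<beta> * A + 1 / \<beta> * B" using A_nonneg B_nonneg beta_pos by simp
  ultimately show ?thesis by linarith
qed

lemma objective_mixture_ge:
  assumes z: "feasible f \<nu> H z"
  obtains K where "\<And>t. 0 < t \<Longrightarrow> t \<le> 1 \<Longrightarrow> objective \<beta> H r dt z + t * K
    - t * ln t / \<beta> * (\<Sum>h=1..H. \<Sum>x\<in>UNIV. if z h x = 0 then dt h x else 0)
    \<le> objective \<beta> H r dt (\<lambda>h x. (1 - t) * z h x + t * dt h x)"
proof -
  let ?m = "\<lambda>h. \<Sum>x\<in>UNIV. if z h x = 0 then dt h x else 0"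
  have z_nonneg: "\<forall>h\<in>{1..H}. \<forall>x. 0 \<le> z h x" using z unfolding feasible_iff by blast
  have "\<forall>h\<in>{1..H}. \<exists>K. \<forall>t. 0 < t \<and> t \<le> 1 \<longrightarrow> stage_obj h (z h) + t * K - t * ln t / \<beta> * ?m h
      \<le> stage_obj h (\<lambda>x. (1 - t) * z h x + t * dt h x)"
    using stage_obj_mixture_ge z_nonneg dt_pos by blast
  then obtain K where K: "\<forall>h\<in>{1..H}. \<forall>t. 0 < t \<and> t \<le> 1 \<longrightarrow>
      stage_obj h (z h) + t * K h - t * ln t / \<beta> * ?m h
        \<le> stage_obj h (\<lambda>x. (1 - t) * z h x + t * dt h x)"
    by (rule bchoice[THEN exE])
  have "objective \<beta> H r dt z + t * (\<Sum>h=1..H. K h) - t * ln t / \<beta> * (\<Sum>h=1..H. ?m h)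
      \<le> objective \<beta> H r dt (\<lambda>h x. (1 - t) * z h x + t * dt h x)" if t: "0 < t" "t \<le> 1" for t
  proof -
    have "objective \<beta> H r dt z + t * (\<Sum>h=1..H. K h) - t * ln t / \<beta> * (\<Sum>h=1..H. ?m h)
        = (\<Sum>h=1..H. stage_obj h (z h) + t * K h - t * ln t / \<beta> * ?m h)"
      using objective_eq_sum_stage_obj z_nonneg
      by (simp add: sum.distrib sum_subtractf sum_distrib_left)
    also have "\<dots> \<le> (\<Sum>h=1..H. stage_obj h (\<lambda>x. (1 - t) * z h x + t * dt h x))"
      using K t by (intro sum_mono) auto
    also have "\<dots> = objective \<beta> H r dt (\<lambda>h x. (1 - t) * z h x + t * dt h x)"
      using feasible_mixture[OF z dt_feas] t objective_eq_sum_stage_obj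
      unfolding feasible_iff by simp
    finally show ?thesis .
  qed
  then show ?thesis using that by blast
qed

lemma objective_perturb_ge:
  assumes z: "\<forall>h\<in>{1..H}. \<forall>x. 0 < z h x" and z_t\<delta>: "\<forall>h\<in>{1..H}. \<forall>x. 0 < z h x + t * \<delta> h x"
  shows "objective \<beta> H r dt z + t * (\<Sum>h=1..H. \<Sum>x\<in>UNIV. \<delta> h x * stage_gradient h (z h) x)
      - t\<^sup>2 * (\<Sum>h=1..H. 2 / \<beta> * (\<Sum>x\<in>UNIV. (\<delta> h x)\<^sup>2 / z h x))
    \<le> objective \<beta> H r dt (\<lambda>h x. z h x + t * \<delta> h x)"
proof -
  have "objective \<beta> H r dt z + t * (\<Sum>h=1..H. \<Sum>x\<in>UNIV. \<delta> h x * stage_gradient h (z h) x)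
      - t\<^sup>2 * (\<Sum>h=1..H. 2 / \<beta> * (\<Sum>x\<in>UNIV. (\<delta> h x)\<^sup>2 / z h x))
      = (\<Sum>h=1..H. stage_obj h (z h) + t * (\<Sum>x\<in>UNIV. \<delta> h x * stage_gradient h (z h) x)
          - t\<^sup>2 * (2 / \<beta> * (\<Sum>x\<in>UNIV. (\<delta> h x)\<^sup>2 / z h x)))"
    using objective_eq_sum_stage_obj z by (simp add: less_imp_le sum.distrib sum_subtractf sum_distrib_left)
  also have "\<dots> \<le> (\<Sum>h=1..H. stage_obj h (\<lambda>x. z h x + t * \<delta> h x))"
    using stage_obj_perturb_ge z z_t\<delta> by (intro sum_mono) blast
  also have "\<dots> = objective \<beta> H r dt (\<lambda>h x. z h x + t * \<delta> h x)"
    using objective_eq_sum_stage_obj z_t\<delta> by (simp add: less_imp_le)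
  finally show ?thesis .
qed

section \<open>Duality between the loss and the objective\<close>

definition residual :: "(nat \<Rightarrow> 's \<times> 'a \<Rightarrow> real) \<Rightarrow> nat \<Rightarrow> 's \<times> 'a \<Rightarrow> real" where
  "residual Q h x = r h x + Fop f (Vfun \<beta> H dt Q (h + 1)) x - Q h x"

definition occ_norm :: "(nat \<Rightarrow> 's \<times> 'a \<Rightarrow> real) \<Rightarrow> nat \<Rightarrow> real" where
  "occ_norm Q h = (\<Sum>x\<in>UNIV. dt h x * exp (\<beta> * residual Q h x))"

definition tilted_occ :: "(nat \<Rightarrow> 's \<times> 'a \<Rightarrow> real) \<Rightarrow> nat \<Rightarrow> 's \<times> 'a \<Rightarrow> real" where
  "tilted_occ Q h x = dt h x * exp (\<beta> * residual Q h x) / occ_norm Q h"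

definition pol_norm :: "(nat \<Rightarrow> 's \<times> 'a \<Rightarrow> real) \<Rightarrow> nat \<Rightarrow> 's \<Rightarrow> real" where
  "pol_norm Q h s = (\<Sum>a\<in>UNIV. pol (dt h) a s * exp (\<beta> * Q h (s, a)))"

definition tilted_pol_occ ::
    "(nat \<Rightarrow> 's \<times> 'a \<Rightarrow> real) \<Rightarrow> (nat \<Rightarrow> 's \<times> 'a \<Rightarrow> real) \<Rightarrow> nat \<Rightarrow> 's \<times> 'a \<Rightarrow> real" where
  "tilted_pol_occ Q z h x
    = ET (z h) (fst x) * (pol (dt h) (snd x) (fst x) * exp (\<beta> * Q h x) / pol_norm Q h (fst x))"

lemma occ_norm_pos: "h \<in> {1..H} \<Longrightarrow> 0 < occ_norm Q h"
  unfolding occ_norm_def using dt_pos by (intro sum_pos) auto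

lemma pol_norm_pos: "h \<in> {1..H} \<Longrightarrow> 0 < pol_norm Q h s"
  unfolding pol_norm_def using pol_dt_pos by (intro sum_pos) auto

lemma tilted_occ_pos: "h \<in> {1..H} \<Longrightarrow> 0 < tilted_occ Q h x"
  unfolding tilted_occ_def using dt_pos' occ_norm_pos by simp

lemma sum_tilted_occ: "h \<in> {1..H} \<Longrightarrow> (\<Sum>x\<in>UNIV. tilted_occ Q h x) = 1"
  unfolding tilted_occ_def using occ_norm_pos[of h Q]
  by (simp add: occ_norm_def flip: sum_divide_distrib)

lemma Vfun_eq_ln_pol_norm: "h \<le> H \<Longrightarrow> Vfun \<beta> H dt Q h s = ln (pol_norm Q h s) / \<beta>"
  unfolding Vfun_def pol_norm_def by simp

lemma Vfun_top: "Vfun \<beta> H dt Q (Suc H) = (\<lambda>s. 0)"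
  unfolding Vfun_def by (simp add: fun_eq_iff)

lemma sum_tilted_pol_occ:
  assumes h: "h \<in> {1..H}" and z: "feasible f \<nu> H z"
  shows "(\<Sum>x\<in>UNIV. tilted_pol_occ Q z h x) = 1"
proof -
  have "(\<Sum>a\<in>UNIV. tilted_pol_occ Q z h (s, a)) = ET (z h) s * (pol_norm Q h s / pol_norm Q h s)" for s
    unfolding tilted_pol_occ_def pol_norm_def
    by (simp only: fst_conv snd_conv flip: sum_distrib_left sum_divide_distrib)
  then have "(\<Sum>x\<in>UNIV. tilted_pol_occ Q z h x) = (\<Sum>s\<in>UNIV. ET (z h) s)"
    using pol_norm_pos[OF h] by (simp add: sum_UNIV_prod less_imp_neq[symmetric])
  then show ?thesis using feasible_stage[OF z h] by (simp add: sum_ET)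
qed

lemma tilted_pol_occ_pos:
  assumes h: "h \<in> {1..H}" and z: "feasible f \<nu> H z" and pos: "0 < z h x"
  shows "0 < tilted_pol_occ Q z h x"
proof -
  have "z h x \<le> ET (z h) (fst x)" using le_ET[of "z h" "fst x" "snd x"] feasible_stage[OF z h] by simp
  then show ?thesis unfolding tilted_pol_occ_def using pos pol_dt_pos[OF h] pol_norm_pos[OF h] by simp
qed

lemma relent_tilted_occ:
  assumes h: "h \<in> {1..H}" and z: "feasible f \<nu> H z"
  shows "relent (z h) (tilted_occ Q h)
    = relent (z h) (dt h) - \<beta> * (\<Sum>x\<in>UNIV. z h x * residual Q h x) + ln (occ_norm Q h)"
proof -
  have z_nonneg: "0 \<le> z h x" for x using feasible_stage[OF z h] by blast
  have "z h x * ln (z h x / tilted_occ Q h x)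
      = z h x * ln (z h x / dt h x) - \<beta> * (z h x * residual Q h x) + z h x * ln (occ_norm Q h)" for x
  proof (cases "z h x = 0")
    case False
    then have "0 < z h x" using z_nonneg[of x] by simp
    moreover have "z h x / tilted_occ Q h x
        = z h x / dt h x * occ_norm Q h / exp (\<beta> * residual Q h x)"
      unfolding tilted_occ_def using dt_pos'[OF h, of x] by simp
    ultimately show ?thesis using dt_pos'[OF h, of x] occ_norm_pos[OF h, of Q]
      by (simp add: ln_mult_pos ln_div algebra_simps)
  qed simp
  then show ?thesis unfolding relent_def
    by (simp add: sum.distrib sum_subtractf sum_distrib_left feasible_stage[OF z h]
        flip: sum_distrib_right)
qed

lemma relent_tilted_pol_occ:
  assumes h: "h \<in> {1..H}" and z: "feasible f \<nu> H z"
  shows "relent (z h) (tilted_pol_occ Q z h) = condrelent (z h) (dt h)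
    - \<beta> * (\<Sum>x\<in>UNIV. z h x * Q h x) + \<beta> * (\<Sum>x\<in>UNIV. z h x * Vfun \<beta> H dt Q h (fst x))"
proof -
  have z_nonneg: "0 \<le> z h x" for x using feasible_stage[OF z h] by blast
  have "z h x * ln (z h x / tilted_pol_occ Q z h x)
      = z h x * ln (pol (z h) (snd x) (fst x) / pol (dt h) (snd x) (fst x))
        - \<beta> * (z h x * Q h x) + \<beta> * (z h x * Vfun \<beta> H dt Q h (fst x))" for x
  proof (cases "z h x = 0")
    case False
    then have pos: "0 < z h x" using z_nonneg[of x] by simp
    then have ET_pos: "0 < ET (z h) (fst x)"
      using le_ET[of "z h" "fst x" "snd x"] z_nonneg by simp
    define \<rho> where "\<rho> = pol (z h) (snd x) (fst x) / pol (dt h) (snd x) (fst x)"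
    have "0 < pol (z h) (snd x) (fst x)" using pos ET_pos by (simp add: pol_eq_div_ET)
    then have \<rho>_pos: "0 < \<rho>" unfolding \<rho>_def using pol_dt_pos[OF h] by simp
    have "z h x / tilted_pol_occ Q z h x = \<rho> * pol_norm Q h (fst x) / exp (\<beta> * Q h x)"
      unfolding tilted_pol_occ_def \<rho>_def pol_eq_div_ET[of "z h"] prod.collapse
      using ET_pos pol_dt_pos[OF h] pol_norm_pos[OF h] by (simp add: field_simps)
    then have "ln (z h x / tilted_pol_occ Q z h x) = ln \<rho> + ln (pol_norm Q h (fst x)) - \<beta> * Q h x"
      using \<rho>_pos pol_norm_pos[OF h, of Q "fst x"] by (simp add: ln_div ln_mult)
    moreover have "ln (pol_norm Q h (fst x)) = \<beta> * Vfun \<beta> H dt Q h (fst x)"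
      using Vfun_eq_ln_pol_norm h beta_pos by simp
    ultimately have ln_ratio: "ln (z h x / tilted_pol_occ Q z h x)
        = ln \<rho> - \<beta> * Q h x + \<beta> * Vfun \<beta> H dt Q h (fst x)"
      by linarith
    show ?thesis unfolding ln_ratio \<rho>_def by (simp add: algebra_simps)
  qed simp
  then show ?thesis unfolding relent_def condrelent_def
    by (simp add: sum.distrib sum_subtractf sum_distrib_left)
qed

lemma loss_eq_objective_plus_relent:
  assumes z: "feasible f \<nu> H z"
  shows "loss \<beta> H f \<nu> r dt Q = objective \<beta> H r dt z
    + (\<Sum>h=1..H. relent (z h) (tilted_occ Q h) + relent (z h) (tilted_pol_occ Q z h)) / \<beta>"
proof -
  let ?V = "Vfun \<beta> H dt Q"
  let ?relent = "\<lambda>h. relent (z h) (tilted_occ Q h) + relent (z h) (tilted_pol_occ Q z h)"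
  let ?flow_term = "\<lambda>h. (\<Sum>x\<in>UNIV. z h x * Fop f (?V (h + 1)) x) - (\<Sum>x\<in>UNIV. z h x * ?V h (fst x))"
  have stage: "ln (occ_norm Q h) / \<beta> = (inner_sa (z h) (r h) - relent (z h) (dt h) / \<beta>
      - condrelent (z h) (dt h) / \<beta>) + ?relent h / \<beta> + ?flow_term h" if h: "h \<in> {1..H}" for h
  proof -
    have residual_sum: "(\<Sum>x\<in>UNIV. z h x * residual Q h x) = inner_sa (z h) (r h)
        + (\<Sum>x\<in>UNIV. z h x * Fop f (?V (h + 1)) x) - (\<Sum>x\<in>UNIV. z h x * Q h x)"
      unfolding residual_def inner_sa_def by (simp add: algebra_simps sum.distrib sum_subtractf)
    have "\<beta> * (\<Sum>x\<in>UNIV. z h x * residual Q h x) = \<beta> * inner_sa (z h) (r h)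
        + \<beta> * (\<Sum>x\<in>UNIV. z h x * Fop f (?V (h + 1)) x) - \<beta> * (\<Sum>x\<in>UNIV. z h x * Q h x)"
      unfolding residual_sum by (simp add: right_diff_distrib distrib_left)
    then have "ln (occ_norm Q h) = ?relent h - relent (z h) (dt h) - condrelent (z h) (dt h)
        + \<beta> * inner_sa (z h) (r h) + \<beta> * ?flow_term h"
      using relent_tilted_occ[OF h z, of Q] relent_tilted_pol_occ[OF h z, of Q]
      by (simp add: right_diff_distrib)
    then show ?thesis using beta_pos by (simp add: add_divide_distrib diff_divide_distrib)
  qed
  have "loss \<beta> H f \<nu> r dt Q = (\<Sum>h=1..H. ln (occ_norm Q h) / \<beta>) + (\<Sum>s\<in>UNIV. \<nu> s * ?V 1 s)"
    unfolding loss_def occ_norm_def residual_def by (simp add: sum_divide_distrib)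
  also have "(\<Sum>h=1..H. ln (occ_norm Q h) / \<beta>)
      = objective \<beta> H r dt z + (\<Sum>h=1..H. ?relent h / \<beta>) + (\<Sum>h=1..H. ?flow_term h)"
    unfolding objective_def using stage by (simp add: sum.distrib)
  also have "(\<Sum>h=1..H. ?flow_term h) = - (\<Sum>s\<in>UNIV. \<nu> s * ?V 1 s)"
    using bellman_flow_telescope[of z \<nu> ?V] z Vfun_top unfolding feasible_iff by simp
  finally show ?thesis by (simp add: sum_divide_distrib)
qed

lemma relent_tilted_nonneg:
  assumes h: "h \<in> {1..H}" and z: "feasible f \<nu> H z"
  shows "0 \<le> relent (z h) (tilted_occ Q h)" and "0 \<le> relent (z h) (tilted_pol_occ Q z h)"
proof -
  have z_stage: "\<forall>x. 0 \<le> z h x" "(\<Sum>x\<in>UNIV. z h x) = 1" using feasible_stage[OF z h] by auto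
  show "0 \<le> relent (z h) (tilted_occ Q h)" unfolding relent_def
    using z_stage tilted_occ_pos[OF h] sum_tilted_occ[OF h]
    by (intro gibbs_inequality) (auto simp: less_imp_le)
  have "0 \<le> tilted_pol_occ Q z h x" for x
    unfolding tilted_pol_occ_def using ET_nonneg[OF z_stage(1)] pol_dt_pos[OF h] pol_norm_pos[OF h]
    by (simp add: less_imp_le)
  then show "0 \<le> relent (z h) (tilted_pol_occ Q z h)" unfolding relent_def
    using z_stage tilted_pol_occ_pos[OF h z] sum_tilted_pol_occ[OF h z]
    by (intro gibbs_inequality) auto
qed

lemma objective_le_loss:
  assumes z: "feasible f \<nu> H z"
  shows "objective \<beta> H r dt z \<le> loss \<beta> H f \<nu> r dt Q"
proof -
  have "0 \<le> (\<Sum>h=1..H. relent (z h) (tilted_occ Q h) + relent (z h) (tilted_pol_occ Q z h))"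
    using relent_tilted_nonneg[OF _ z] by (intro sum_nonneg add_nonneg_nonneg) auto
  then show ?thesis using loss_eq_objective_plus_relent[OF z, of Q] beta_pos by simp
qed

end

section \<open>The maximiser and its dual values\<close>

function backward_rec :: "nat \<Rightarrow> (nat \<Rightarrow> ('s \<Rightarrow> real) \<Rightarrow> 's \<Rightarrow> real) \<Rightarrow> nat \<Rightarrow> 's \<Rightarrow> real" where
  "backward_rec H step h = (if H < h then (\<lambda>s. 0) else step h (backward_rec H step (Suc h)))"
  by auto
termination by (relation "measure (\<lambda>(H, step, h). Suc H - h)") auto

declare backward_rec.simps [simp del]

lemma backward_rec_above: "H < h \<Longrightarrow> backward_rec H step h = (\<lambda>s. 0)"
  by (simp add: backward_rec.simps)

lemma backward_rec_step: "h \<le> H \<Longrightarrow> backward_rec H step h = step h (backward_rec H step (Suc h))"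
  by (subst backward_rec.simps) simp

locale mirror_step_max = mirror_step f \<nu> H \<beta> r dt
  for f :: "'s::finite \<Rightarrow> 'a::finite \<Rightarrow> 's \<Rightarrow> real" and \<nu> :: "'s \<Rightarrow> real" and H :: nat
    and \<beta> :: real and r dt :: "nat \<Rightarrow> 's \<times> 'a \<Rightarrow> real" +
  fixes d :: "nat \<Rightarrow> 's \<times> 'a \<Rightarrow> real"
  assumes d_feas: "feasible f \<nu> H d"
    and d_max: "\<forall>d'. feasible f \<nu> H d' \<longrightarrow> objective \<beta> H r dt d' \<le> objective \<beta> H r dt d"
begin

lemma d_nonneg: "h \<in> {1..H} \<Longrightarrow> 0 \<le> d h x"
  using d_feas unfolding feasible_iff by blast

lemma d_flow: "bellman_flow d \<nu>"
  using d_feas unfolding feasible_iff by blast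

lemma d_pos:
  assumes h0: "h0 \<in> {1..H}"
  shows "0 < d h0 x0"
proof (rule ccontr)
  assume "\<not> 0 < d h0 x0"
  then have "d h0 x0 = 0" using d_nonneg[OF h0, of x0] by simp
  let ?m = "\<lambda>h. \<Sum>x\<in>UNIV. if d h x = 0 then dt h x else 0"
  have m_nonneg: "\<forall>h\<in>{1..H}. 0 \<le> ?m h" using dt_pos' by (simp add: sum_nonneg less_imp_le)
  have "dt h0 x0 \<le> ?m h0"
    using member_le_sum[of x0 UNIV "\<lambda>x. if d h0 x = 0 then dt h0 x else 0"] \<open>d h0 x0 = 0\<close>
      dt_pos' h0 by (simp add: less_imp_le)
  also have "\<dots> \<le> (\<Sum>h=1..H. ?m h)" by (rule member_le_sum) (use m_nonneg h0 in auto)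
  finally have M_pos: "0 < (\<Sum>h=1..H. ?m h) / \<beta>" using dt_pos'[OF h0, of x0] beta_pos by simp
  obtain K where K: "\<And>t. 0 < t \<Longrightarrow> t \<le> 1 \<Longrightarrow> objective \<beta> H r dt d + t * K
      - t * ln t / \<beta> * (\<Sum>h=1..H. ?m h) \<le> objective \<beta> H r dt (\<lambda>h x. (1 - t) * d h x + t * dt h x)"
    using objective_mixture_ge[OF d_feas] by blast
  have "K \<le> ln t * ((\<Sum>h=1..H. ?m h) / \<beta>)" if t: "0 < t" "t \<le> 1" for t
  proof -
    have "objective \<beta> H r dt (\<lambda>h x. (1 - t) * d h x + t * dt h x) \<le> objective \<beta> H r dt d"
      using d_max feasible_mixture[OF d_feas dt_feas] t by simp
    then have "t * (K - ln t * ((\<Sum>h=1..H. ?m h) / \<beta>)) \<le> 0"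
      using K[OF t] by (simp add: algebra_simps)
    then show ?thesis using t by (simp add: mult_le_0_iff)
  qed
  then show False using exists_ln_mult_less[OF M_pos] by (meson not_le)
qed

lemma stationary:
  assumes \<delta>: "bellman_flow \<delta> (\<lambda>s. 0)"
  shows "(\<Sum>h=1..H. \<Sum>x\<in>UNIV. \<delta> h x * stage_gradient h (d h) x) = 0"
proof -
  let ?grad = "\<Sum>h=1..H. \<Sum>x\<in>UNIV. \<delta> h x * stage_gradient h (d h) x"
  let ?curv = "\<Sum>h=1..H. 2 / \<beta> * (\<Sum>x\<in>UNIV. (\<delta> h x)\<^sup>2 / d h x)"
  have "\<forall>\<^sub>F t in nhds 0. \<forall>h\<in>{1..H}. \<forall>x. 0 < d h x + t * \<delta> h x"
  proof (intro eventually_ball_finite ballI eventually_all_finite allI)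
    fix h x assume h: "h \<in> {1..H}"
    have "((\<lambda>t. d h x + t * \<delta> h x) \<longlongrightarrow> d h x + 0 * \<delta> h x) (nhds 0)"
      by (intro tendsto_intros filterlim_ident)
    then show "\<forall>\<^sub>F t in nhds 0. 0 < d h x + t * \<delta> h x"
      using d_pos[OF h] by (simp add: order_tendstoD(1))
  qed simp
  then obtain \<epsilon> where \<epsilon>: "0 < \<epsilon>"
    and pos: "\<And>t. \<bar>t\<bar> < \<epsilon> \<Longrightarrow> \<forall>h\<in>{1..H}. \<forall>x. 0 < d h x + t * \<delta> h x"
    unfolding eventually_nhds_metric dist_real_def by auto
  have "t * ?grad \<le> t\<^sup>2 * ?curv" if t: "\<bar>t\<bar> < \<epsilon>" for t
  proof -
    have "feasible f \<nu> H (\<lambda>h x. d h x + t * \<delta> h x)"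
      using feasible_add_circulation[OF d_flow \<delta>] pos[OF t] by (simp add: less_imp_le)
    then have "objective \<beta> H r dt (\<lambda>h x. d h x + t * \<delta> h x) \<le> objective \<beta> H r dt d"
      using d_max by blast
    then show ?thesis using objective_perturb_ge[of d t \<delta>] d_pos pos[OF t] by simp
  qed
  then show ?thesis using linear_le_quadratic_imp_zero[OF \<epsilon>] by blast
qed

lemma ET_d_pos: "h \<in> {1..H} \<Longrightarrow> 0 < ET (d h) s"
  using d_pos ET_pos by blast

lemma sum_pol_d: "h \<in> {1..H} \<Longrightarrow> (\<Sum>a\<in>UNIV. pol (d h) a s) = 1"
  using ET_d_pos sum_pol by (metis less_irrefl)

text \<open>\<open>dual_value h\<close> is the multiplier of the flow constraint at stage \<open>h\<close>: the optimality
  condition of \<open>d\<close> turns out to be \<open>advantage h = 0\<close> (lemma \<open>advantage_eq_0\<close>).\<close>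

definition dual_value :: "nat \<Rightarrow> 's \<Rightarrow> real" where
  "dual_value = backward_rec H (\<lambda>h W s. \<Sum>a\<in>UNIV. pol (d h) a s *
     (stage_gradient h (d h) (s, a) + Fop f W (s, a)))"

lemma dual_value_top: "dual_value (Suc H) = (\<lambda>s. 0)"
  by (simp add: dual_value_def backward_rec_above)

lemma dual_value_rec:
  "h \<le> H \<Longrightarrow> dual_value h s
    = (\<Sum>a\<in>UNIV. pol (d h) a s * (stage_gradient h (d h) (s, a) + Fop f (dual_value (Suc h)) (s, a)))"
  unfolding dual_value_def by (subst backward_rec_step) auto

definition advantage :: "nat \<Rightarrow> 's \<times> 'a \<Rightarrow> real" where
  "advantage h x = stage_gradient h (d h) x + Fop f (dual_value (Suc h)) x - dual_value h (fst x)"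

lemma sum_pol_advantage:
  assumes h: "h \<in> {1..H}"
  shows "(\<Sum>a\<in>UNIV. pol (d h) a s * advantage h (s, a)) = 0"
proof -
  have "(\<Sum>a\<in>UNIV. pol (d h) a s * advantage h (s, a))
      = (\<Sum>a\<in>UNIV. pol (d h) a s * (stage_gradient h (d h) (s, a) + Fop f (dual_value (Suc h)) (s, a)))
        - (\<Sum>a\<in>UNIV. pol (d h) a s) * dual_value h s"
    unfolding advantage_def by (simp add: right_diff_distrib sum_subtractf sum_distrib_right)
  then show ?thesis using h dual_value_rec[of h s] sum_pol_d[OF h] by simp
qed

lemma sum_gradient_eq_sum_advantage:
  assumes \<delta>: "bellman_flow \<delta> (\<lambda>s. 0)"
  shows "(\<Sum>h=1..H. \<Sum>x\<in>UNIV. \<delta> h x * stage_gradient h (d h) x)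
    = (\<Sum>h=1..H. \<Sum>x\<in>UNIV. \<delta> h x * advantage h x)"
proof -
  have "(\<Sum>h=1..H. \<Sum>x\<in>UNIV. \<delta> h x * advantage h x)
      = (\<Sum>h=1..H. \<Sum>x\<in>UNIV. \<delta> h x * stage_gradient h (d h) x)
        + (\<Sum>h=1..H. (\<Sum>x\<in>UNIV. \<delta> h x * Fop f (dual_value (h + 1)) x)
            - (\<Sum>x\<in>UNIV. \<delta> h x * dual_value h (fst x)))"
    unfolding advantage_def by (simp add: algebra_simps sum.distrib sum_subtractf)
  then show ?thesis using bellman_flow_telescope[of \<delta> "\<lambda>s. 0" dual_value] \<delta> dual_value_top by simp
qed

text \<open>Moves mass at stage \<open>h\<^sub>0\<close> in state \<open>s\<^sub>0\<close> from \<open>\<pi>\<^sub>d(\<cdot>|s\<^sub>0)\<close> onto \<open>a\<^sub>0\<close> and lets the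
  change propagate under \<open>\<pi>\<^sub>d\<close> at later stages; since it has no initial flow, it is an admissible
  direction, and it isolates \<open>advantage h\<^sub>0 (s\<^sub>0, a\<^sub>0)\<close>.\<close>

primrec probe :: "nat \<Rightarrow> 's \<Rightarrow> 'a \<Rightarrow> nat \<Rightarrow> 's \<times> 'a \<Rightarrow> real" where
  "probe h0 s0 a0 0 = (\<lambda>x. 0)"
| "probe h0 s0 a0 (Suc h) =
    (if Suc h < h0 then (\<lambda>x. 0)
     else if Suc h = h0 then
       (\<lambda>x. if fst x = s0 then (if snd x = a0 then 1 else 0) - pol (d h0) (snd x) s0 else 0)
     else (\<lambda>x. FT f (probe h0 s0 a0 h) (fst x) * pol (d (Suc h)) (snd x) (fst x)))"

lemma probe_below: "h < h0 \<Longrightarrow> probe h0 s0 a0 h = (\<lambda>x. 0)"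
  by (cases h) auto

lemma probe_at:
  "1 \<le> h0 \<Longrightarrow> probe h0 s0 a0 h0
    = (\<lambda>x. if fst x = s0 then (if snd x = a0 then 1 else 0) - pol (d h0) (snd x) s0 else 0)"
  by (cases h0) auto

lemma probe_above:
  "h0 < Suc h \<Longrightarrow> probe h0 s0 a0 (Suc h)
    = (\<lambda>x. FT f (probe h0 s0 a0 h) (fst x) * pol (d (Suc h)) (snd x) (fst x))"
  by simp

lemma probe_flow:
  assumes h0: "h0 \<in> {1..H}"
  shows "bellman_flow (probe h0 s0 a0) (\<lambda>s. 0)"
  unfolding bellman_flow_def
proof
  fix h assume h: "h \<in> {1..H}"
  have FT_0: "FT f (\<lambda>x. 0) = (\<lambda>s. 0)" by (simp add: FT_def fun_eq_iff)
  consider "h < h0" | "h = h0" | "h0 < h" by linarith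
  then show "ET (probe h0 s0 a0 h) = (if h = 1 then (\<lambda>s. 0) else FT f (probe h0 s0 a0 (h - 1)))"
  proof cases
    case 1
    then show ?thesis by (simp add: probe_below FT_0 ET_def fun_eq_iff)
  next
    case 2
    have "ET (probe h0 s0 a0 h0) s = 0" for s
      using h0 sum_pol_d[OF h0, of s0] by (cases "s = s0") (simp_all add: probe_at ET_def sum_subtractf)
    then show ?thesis using 2 h0 by (simp add: probe_below FT_0 fun_eq_iff)
  next
    case 3
    then obtain k where k: "h = Suc k" "h0 \<le> k" by (cases h) auto
    have "ET (probe h0 s0 a0 h) s = FT f (probe h0 s0 a0 k) s * (\<Sum>a\<in>UNIV. pol (d h) a s)" for s
      using k by (simp add: probe_above ET_def sum_distrib_left)
    then show ?thesis using k h0 sum_pol_d[OF h] by (simp add: fun_eq_iff)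
  qed
qed

lemma sum_probe_advantage:
  assumes h0: "h0 \<in> {1..H}" and h: "h \<in> {1..H}"
  shows "(\<Sum>x\<in>UNIV. probe h0 s0 a0 h x * advantage h x) = (if h = h0 then advantage h0 (s0, a0) else 0)"
proof -
  consider "h < h0" | "h = h0" | "h0 < h" by linarith
  then show ?thesis
  proof cases
    case 1
    then show ?thesis by (simp add: probe_below)
  next
    case 2
    have "(\<Sum>x\<in>UNIV. probe h0 s0 a0 h0 x * advantage h0 x) = (\<Sum>s\<in>UNIV. if s = s0 then
        (\<Sum>a\<in>UNIV. ((if a = a0 then 1 else 0) - pol (d h0) a s0) * advantage h0 (s0, a)) else 0)"
      using h0 unfolding sum_UNIV_prod by (intro sum.cong) (auto simp: probe_at)
    also have "\<dots> = advantage h0 (s0, a0) - (\<Sum>a\<in>UNIV. pol (d h0) a s0 * advantage h0 (s0, a))"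
      by (simp add: left_diff_distrib sum_subtractf if_distrib[of "\<lambda>u. u * _"] cong: if_cong)
    finally show ?thesis using 2 sum_pol_advantage[OF h0] by simp
  next
    case 3
    then obtain k where k: "h = Suc k" "h0 < Suc k" by (cases h) auto
    have "(\<Sum>x\<in>UNIV. probe h0 s0 a0 h x * advantage h x)
        = (\<Sum>s\<in>UNIV. FT f (probe h0 s0 a0 k) s * (\<Sum>a\<in>UNIV. pol (d h) a s * advantage h (s, a)))"
      unfolding k probe_above[OF k(2)] by (simp add: sum_UNIV_prod sum_distrib_left algebra_simps)
    then show ?thesis using 3 sum_pol_advantage[OF h] by simp
  qed
qed

lemma advantage_eq_0:
  assumes h0: "h0 \<in> {1..H}"
  shows "advantage h0 (s0, a0) = 0"
proof -
  have "0 = (\<Sum>h=1..H. \<Sum>x\<in>UNIV. probe h0 s0 a0 h x * stage_gradient h (d h) x)"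
    using stationary[OF probe_flow[OF h0]] by simp
  also have "\<dots> = (\<Sum>h=1..H. \<Sum>x\<in>UNIV. probe h0 s0 a0 h x * advantage h x)"
    by (rule sum_gradient_eq_sum_advantage[OF probe_flow[OF h0]])
  also have "\<dots> = (\<Sum>h=1..H. if h = h0 then advantage h0 (s0, a0) else 0)"
    using sum_probe_advantage[OF h0] by simp
  finally show ?thesis using h0 by simp
qed

section \<open>The minimiser of the loss\<close>

definition Q_star :: "nat \<Rightarrow> 's \<times> 'a \<Rightarrow> real" where
  "Q_star h x = (ln (pol (d h) (snd x) (fst x)) - ln (pol (dt h) (snd x) (fst x))) / \<beta>
    + dual_value h (fst x)"

lemma pol_d_pos: "h \<in> {1..H} \<Longrightarrow> 0 < pol (d h) a s"
  using d_pos pol_pos by blast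

lemma pol_dt_exp_Q_star:
  assumes h: "h \<in> {1..H}"
  shows "pol (dt h) a s * exp (\<beta> * Q_star h (s, a)) = pol (d h) a s * exp (\<beta> * dual_value h s)"
proof -
  have "\<beta> * Q_star h (s, a) = ln (pol (d h) a s) - ln (pol (dt h) a s) + \<beta> * dual_value h s"
    unfolding Q_star_def using beta_pos by (simp add: distrib_left)
  then show ?thesis
    using pol_d_pos[OF h] pol_dt_pos[OF h, of a s] by (simp add: exp_add exp_diff)
qed

lemma pol_norm_Q_star: "h \<in> {1..H} \<Longrightarrow> pol_norm Q_star h s = exp (\<beta> * dual_value h s)"
  unfolding pol_norm_def pol_dt_exp_Q_star by (simp add: sum_pol_d flip: sum_distrib_right)

lemma Vfun_Q_star:
  assumes "1 \<le> h" and "h \<le> Suc H"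
  shows "Vfun \<beta> H dt Q_star h = dual_value h"
proof (cases "h = Suc H")
  case True
  then show ?thesis using Vfun_top dual_value_top by simp
next
  case False
  then have "h \<in> {1..H}" using assms by simp
  then show ?thesis using Vfun_eq_ln_pol_norm pol_norm_Q_star beta_pos by (simp add: fun_eq_iff)
qed

lemma residual_Q_star:
  assumes h: "h \<in> {1..H}"
  shows "\<beta> * residual Q_star h x = ln (d h x) - ln (dt h x) + 1"
proof -
  let ?ln_pol_d = "ln (pol (d h) (snd x) (fst x))" and ?ln_pol_dt = "ln (pol (dt h) (snd x) (fst x))"
  have "stage_gradient h (d h) x + Fop f (dual_value (Suc h)) x = dual_value h (fst x)"
    using advantage_eq_0[OF h, of "fst x" "snd x"] unfolding advantage_def by simp
  moreover have "Vfun \<beta> H dt Q_star (h + 1) = dual_value (Suc h)" using h Vfun_Q_star by simp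
  ultimately have "residual Q_star h x = r h x - stage_gradient h (d h) x - (?ln_pol_d - ?ln_pol_dt) / \<beta>"
    unfolding residual_def Q_star_def by simp
  then have "\<beta> * residual Q_star h x = \<beta> * r h x - \<beta> * stage_gradient h (d h) x - (?ln_pol_d - ?ln_pol_dt)"
    using beta_pos by (simp add: field_simps)
  moreover have "\<beta> * stage_gradient h (d h) x = \<beta> * r h x + ln (dt h x) + ?ln_pol_dt
      - 2 * (ln (d h x) + 1) + (ln (ET (d h) (fst x)) + 1)"
    unfolding stage_gradient_def shifted_reward_def using beta_pos by (simp add: field_simps)
  moreover have "?ln_pol_d = ln (d h x) - ln (ET (d h) (fst x))"
    using d_pos[OF h, of x] ET_d_pos[OF h, of "fst x"] by (simp add: pol_eq_div_ET ln_div)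
  ultimately show ?thesis by (simp add: algebra_simps)
qed

lemma tilted_occ_Q_star:
  assumes h: "h \<in> {1..H}"
  shows "tilted_occ Q_star h = d h"
proof -
  have unnormalised: "dt h x * exp (\<beta> * residual Q_star h x) = d h x * exp 1" for x
    unfolding residual_Q_star[OF h] using d_pos[OF h, of x] dt_pos'[OF h, of x]
    by (simp add: exp_add exp_diff)
  have "occ_norm Q_star h = exp 1"
    unfolding occ_norm_def unnormalised using feasible_stage[OF d_feas h]
    by (simp flip: sum_distrib_right)
  then show ?thesis unfolding tilted_occ_def unnormalised by (simp add: fun_eq_iff)
qed

lemma tilted_pol_occ_Q_star:
  assumes h: "h \<in> {1..H}"
  shows "tilted_pol_occ Q_star d h = d h"
proof
  fix x
  have "tilted_pol_occ Q_star d h x = ET (d h) (fst x) * (pol (d h) (snd x) (fst x)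
      * exp (\<beta> * dual_value h (fst x)) / exp (\<beta> * dual_value h (fst x)))"
    unfolding tilted_pol_occ_def pol_norm_Q_star[OF h]
    using pol_dt_exp_Q_star[OF h, of "snd x" "fst x"] by simp
  then show "tilted_pol_occ Q_star d h x = d h x"
    using ET_d_pos[OF h, of "fst x"] by (simp add: pol_eq_div_ET)
qed

lemma loss_Q_star: "loss \<beta> H f \<nu> r dt Q_star = objective \<beta> H r dt d"
  using loss_eq_objective_plus_relent[OF d_feas, of Q_star]
  by (simp add: tilted_occ_Q_star tilted_pol_occ_Q_star relent_self)

lemma Q_star_minimises_loss: "loss \<beta> H f \<nu> r dt Q_star \<le> loss \<beta> H f \<nu> r dt Q"
  unfolding loss_Q_star by (rule objective_le_loss[OF d_feas])

lemma pol_update_of_loss_minimiser: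
  assumes min: "\<forall>Q'. loss \<beta> H f \<nu> r dt Q \<le> loss \<beta> H f \<nu> r dt Q'" and h: "h \<in> {1..H}"
  shows "pol (d h) a s = pol (dt h) a s * exp (\<beta> * Q h (s, a)) / pol_norm Q h s"
proof -
  let ?relent = "\<lambda>h. relent (d h) (tilted_occ Q h) + relent (d h) (tilted_pol_occ Q d h)"
  have nonneg: "\<forall>h\<in>{1..H}. 0 \<le> ?relent h"
    using relent_tilted_nonneg[OF _ d_feas] by simp
  have "loss \<beta> H f \<nu> r dt Q \<le> objective \<beta> H r dt d" using min loss_Q_star by metis
  then have "(\<Sum>h=1..H. ?relent h) \<le> 0"
    using loss_eq_objective_plus_relent[OF d_feas, of Q] beta_pos by (simp add: divide_le_0_iff)
  then have "?relent h = 0"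
    using sum_nonneg_eq_0_iff[of "{1..H}" ?relent] nonneg sum_nonneg[of "{1..H}" ?relent] h
    by simp
  then have "relent (d h) (tilted_pol_occ Q d h) \<le> 0"
    using relent_tilted_nonneg[OF h d_feas, of Q] by linarith
  then have "tilted_pol_occ Q d h = d h"
    unfolding relent_def using d_pos[OF h] tilted_pol_occ_pos[OF h d_feas]
      feasible_stage[OF d_feas h] sum_tilted_pol_occ[OF h d_feas]
    by (intro gibbs_inequality_le_0_imp_eq) auto
  then have "ET (d h) s * (pol (dt h) a s * exp (\<beta> * Q h (s, a)) / pol_norm Q h s)
      = ET (d h) s * pol (d h) a s"
    using ET_d_pos[OF h, of s] unfolding tilted_pol_occ_def by (simp add: pol_eq_div_ET fun_eq_iff)
  then show ?thesis using ET_d_pos[OF h, of s] by (subst (asm) mult_left_cancel) auto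
qed

end

theorem theorem6:
  fixes f :: "'s::finite \<Rightarrow> 'a::finite \<Rightarrow> 's \<Rightarrow> real"
    and \<nu> :: "'s \<Rightarrow> real" and H :: nat and \<beta> :: real
    and r dt dt1 :: "nat \<Rightarrow> 's \<times> 'a \<Rightarrow> real"
  assumes f_nonneg: "\<forall>s a s'. 0 \<le> f s a s'"
    and f_sum: "\<forall>s a. (\<Sum>s'\<in>UNIV. f s a s') = 1"
    and nu_nonneg: "\<forall>s. 0 \<le> \<nu> s" and nu_sum: "(\<Sum>s\<in>UNIV. \<nu> s) = 1"
    and beta_pos: "\<beta> > 0"
    and dt_feas: "feasible f \<nu> H dt"
    and dt_pos: "\<forall>h\<in>{1..H}. \<forall>x. 0 < dt h x"
    and dt1_feas: "feasible f \<nu> H dt1"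
    and dt1_max: "\<forall>d. feasible f \<nu> H d \<longrightarrow> objective \<beta> H r dt d \<le> objective \<beta> H r dt dt1"
  shows "(\<exists>Q. \<forall>Q'. loss \<beta> H f \<nu> r dt Q \<le> loss \<beta> H f \<nu> r dt Q') \<and>
         (\<forall>Q. (\<forall>Q'. loss \<beta> H f \<nu> r dt Q \<le> loss \<beta> H f \<nu> r dt Q') \<longrightarrow>
            (\<forall>h\<in>{1..H}. \<forall>s. \<exists>c>0. \<forall>a.
               pol (dt1 h) a s = c * (pol (dt h) a s * exp (\<beta> * Q h (s, a)))))"
proof -
  interpret mirror_step_max f \<nu> H \<beta> r dt dt1
    using f_sum nu_sum beta_pos dt_feas dt_pos dt1_feas dt1_max by unfold_locales
  have "\<exists>c>0. \<forall>a. pol (dt1 h) a s = c * (pol (dt h) a s * exp (\<beta> * Q h (s, a)))"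
    if "\<forall>Q'. loss \<beta> H f \<nu> r dt Q \<le> loss \<beta> H f \<nu> r dt Q'" and "h \<in> {1..H}" for Q h s
    using pol_update_of_loss_minimiser[OF that] pol_norm_pos[OF that(2), of Q s]
    by (intro exI[of _ "1 / pol_norm Q h s"]) simp
  then show ?thesis using Q_star_minimises_loss by blast
qed

end
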